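(* Let $\mu>1$ and $\beta>0$. If $\tilde f\in\tilde{\mathcal C}_{1,\beta}(V)$ is such that $\tilde M=\tilde\delta\tilde f$ satisfies $\mathcal N[\tilde M;\tilde{\mathcal C}^\mu_{2,\beta}]<\infty$, then $\tilde M=0$. In other words, $\mathcal Z\tilde{\mathcal C}^\mu_{2,\beta}=\{0\}$.
   Context: Fix a measurable $\hat\phi:(0,\infty)\to\mathbb R$, a separable Banach space $V$ and an interval $[\ell_1,\ell_2]$. $\mathcal L_\beta(V)$ is the space of measurable $g:[0,\infty)\to V$ with $\mathcal N[g;\mathcal L_\beta]=\int_0^\infty|\hat\phi(\xi)|(1+\xi^\beta)\|g(\xi)\|_Vd\xi<\infty$. $\tilde{\mathcal C}_{1,\beta}(V)$ is the space of continuous maps $[\ell_1,\ell_2]\to\mathcal L_\beta(V)$, $\tilde{\mathcal C}_{2,\beta}(V)$ the space of continuous maps from $\{(t,s):\ell_2\ge t\ge s\ge\ell_1\}$ to $\mathcal L_\beta(V)$. $(\tilde\delta\tilde f)_{ts}(\xi)=\tilde f_t(\xi)-e^{-\xi(t-s)}\tilde f_s(\xi)$. $\mathcal N[\tilde M;\tilde{\mathcal C}^\mu_{2,\beta}]=\sup_{s<t}\mathcal N[\tilde M_{ts};\mathcal L_\beta]/|t-s|^\mu$, and $\mathcal Z\tilde{\mathcal C}^\mu_{2,\beta}$ is the set of elements of $\tilde{\mathcal C}_{2,\beta}$ of finite such norm lying in the image of $\tilde\delta$. *)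

theory Defs
  imports "HOL-Analysis.Analysis"
begin

definition Nbeta :: "(real \<Rightarrow> real) \<Rightarrow> real \<Rightarrow> (real \<Rightarrow> 'v::real_normed_vector) \<Rightarrow> ennreal" where
  "Nbeta phi beta g =
     (\<integral>\<^sup>+ \<xi>\<in>{0..}. ennreal (\<bar>phi \<xi>\<bar> * (1 + \<xi> powr beta) * norm (g \<xi>)) \<partial>lborel)"

definition Lbeta :: "(real \<Rightarrow> real) \<Rightarrow> real \<Rightarrow> (real \<Rightarrow> 'v::{banach,second_countable_topology}) set" where
  "Lbeta phi beta = {g. g \<in> borel_measurable (restrict_space lborel {0..}) \<and> Nbeta phi beta g < \<infinity>}"

definition C1beta :: "(real \<Rightarrow> real) \<Rightarrow> real \<Rightarrow> real \<Rightarrow> real \<Rightarrow>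
    (real \<Rightarrow> real \<Rightarrow> 'v::{banach,second_countable_topology}) set" where
  "C1beta phi beta l1 l2 =
     {f. (\<forall>t\<in>{l1..l2}. f t \<in> Lbeta phi beta) \<and>
         (\<forall>t\<in>{l1..l2}. \<forall>\<epsilon>>0. \<exists>d>0. \<forall>s\<in>{l1..l2}. \<bar>s - t\<bar> < d \<longrightarrow>
             Nbeta phi beta (\<lambda>\<xi>. f s \<xi> - f t \<xi>) < ennreal \<epsilon>)}"

definition tdelta :: "(real \<Rightarrow> real \<Rightarrow> 'v::real_normed_vector) \<Rightarrow> real \<Rightarrow> real \<Rightarrow> real \<Rightarrow> 'v" where
  "tdelta f t s = (\<lambda>\<xi>. f t \<xi> - exp (- \<xi> * (t - s)) *\<^sub>R f s \<xi>)"

definition NC2mu :: "(real \<Rightarrow> real) \<Rightarrow> real \<Rightarrow> real \<Rightarrow> real \<Rightarrow> real \<Rightarrow>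
    (real \<Rightarrow> real \<Rightarrow> real \<Rightarrow> 'v::real_normed_vector) \<Rightarrow> ennreal" where
  "NC2mu phi beta mu l1 l2 M =
     (SUP p\<in>{(t, s). l1 \<le> s \<and> s < t \<and> t \<le> l2}.
        Nbeta phi beta (M (fst p) (snd p)) / ennreal (\<bar>fst p - snd p\<bar> powr mu))"

end

theory Submission
  imports Defs
begin

text \<open>The increment M = \<delta>f satisfies Chen's relation
  M(t,u) = M(t,s) + exp(-\<xi>(t-s)) M(s,u), whose factor exp(-\<xi>(t-s)) has modulus at most 1
  for \<xi> \<ge> 0. Hence the weighted norm of M(t,u) is at most the sum of the norms of M over the
  pieces of any partition of [u,t]. On the uniform partition into n pieces each term is
  O((t-u)/n)^\<mu>, so the sum is O(n^(1-\<mu>)), which tends to 0 because \<mu> > 1.\<close>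

lemma tdelta_chen:
  fixes f :: "real \<Rightarrow> real \<Rightarrow> 'v::real_normed_vector"
  shows "tdelta f t u \<xi> = tdelta f t s \<xi> + exp (- \<xi> * (t - s)) *\<^sub>R tdelta f s u \<xi>"
proof -
  have "exp (\<xi> * s - \<xi> * t) * exp (\<xi> * u - \<xi> * s) = exp (\<xi> * u - \<xi> * t)"
    by (simp add: exp_add[symmetric])
  then show ?thesis
    unfolding tdelta_def by (simp add: algebra_simps)
qed

lemma norm_tdelta_triangle:
  fixes f :: "real \<Rightarrow> real \<Rightarrow> 'v::real_normed_vector"
  assumes "\<xi> \<ge> 0" "s \<le> t"
  shows "norm (tdelta f t u \<xi>) \<le> norm (tdelta f t s \<xi>) + norm (tdelta f s u \<xi>)"
proof -
  have "exp (- \<xi> * (t - s)) \<le> 1"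
    using assms by simp
  then have "norm (exp (- \<xi> * (t - s)) *\<^sub>R tdelta f s u \<xi>) \<le> norm (tdelta f s u \<xi>)"
    by (simp add: mult_left_le_one_le)
  then show ?thesis
    unfolding tdelta_chen[of f t u \<xi> s] by (meson norm_triangle_le order.refl add_mono)
qed

lemma norm_tdelta_chain_le:
  fixes f :: "real \<Rightarrow> real \<Rightarrow> 'v::real_normed_vector"
  assumes "\<xi> \<ge> 0" "incseq a"
  shows "norm (tdelta f (a n) (a 0) \<xi>) \<le> (\<Sum>k<n. norm (tdelta f (a (Suc k)) (a k) \<xi>))"
proof (induction n)
  case 0
  then show ?case by (simp add: tdelta_def)
next
  case (Suc n)
  have "a n \<le> a (Suc n)"
    using assms(2) by (simp add: incseq_SucD)
  then have "norm (tdelta f (a (Suc n)) (a 0) \<xi>)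
      \<le> norm (tdelta f (a (Suc n)) (a n) \<xi>) + norm (tdelta f (a n) (a 0) \<xi>)"
    by (rule norm_tdelta_triangle[OF assms(1)])
  then show ?case
    using Suc by simp
qed

lemma Nbeta_eq_nn_integral_restrict:
  "Nbeta phi beta g =
     (\<integral>\<^sup>+ \<xi>. ennreal (\<bar>phi \<xi>\<bar> * (1 + \<xi> powr beta) * norm (g \<xi>)) \<partial>restrict_space lborel {0..})"
  unfolding Nbeta_def by (subst nn_integral_restrict_space) auto

lemma tdelta_weighted_measurable:
  fixes f :: "real \<Rightarrow> real \<Rightarrow> 'v::{banach,second_countable_topology}"
  assumes "phi \<in> borel_measurable lborel"
    and "f a \<in> borel_measurable (restrict_space lborel {0..})"
    and "f b \<in> borel_measurable (restrict_space lborel {0..})"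
  shows "(\<lambda>\<xi>. ennreal (\<bar>phi \<xi>\<bar> * (1 + \<xi> powr beta) * norm (tdelta f a b \<xi>)))
           \<in> borel_measurable (restrict_space lborel {0..})"
proof -
  have [measurable]: "f a \<in> borel_measurable (restrict_space lborel {0..})"
    "f b \<in> borel_measurable (restrict_space lborel {0..})"
    using assms(2,3) .
  have [measurable]: "phi \<in> borel_measurable (restrict_space lborel {0..})"
    by (rule measurable_restrict_space1[OF assms(1)])
  have [measurable]: "(\<lambda>\<xi>::real. 1 + \<xi> powr beta) \<in> borel_measurable (restrict_space lborel {0..})"
    "(\<lambda>\<xi>::real. exp (- \<xi> * (a - b))) \<in> borel_measurable (restrict_space lborel {0..})"
    by (rule measurable_restrict_space1, measurable)+
  show ?thesis
    unfolding tdelta_def by measurable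
qed

lemma Nbeta_tdelta_chain_le:
  fixes f :: "real \<Rightarrow> real \<Rightarrow> 'v::{banach,second_countable_topology}"
  assumes "phi \<in> borel_measurable lborel" "incseq a"
    and "\<And>k. k \<le> n \<Longrightarrow> f (a k) \<in> borel_measurable (restrict_space lborel {0..})"
  shows "Nbeta phi beta (tdelta f (a n) (a 0)) \<le> (\<Sum>k<n. Nbeta phi beta (tdelta f (a (Suc k)) (a k)))"
proof -
  let ?R = "restrict_space lborel {0::real..}"
  let ?w = "\<lambda>\<xi>::real. \<bar>phi \<xi>\<bar> * (1 + \<xi> powr beta)"
  have "Nbeta phi beta (tdelta f (a n) (a 0)) = (\<integral>\<^sup>+ \<xi>. ennreal (?w \<xi> * norm (tdelta f (a n) (a 0) \<xi>)) \<partial>?R)"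
    by (rule Nbeta_eq_nn_integral_restrict)
  also have "\<dots> \<le> (\<integral>\<^sup>+ \<xi>. (\<Sum>k<n. ennreal (?w \<xi> * norm (tdelta f (a (Suc k)) (a k) \<xi>))) \<partial>?R)"
  proof (rule nn_integral_mono)
    fix \<xi> assume "\<xi> \<in> space ?R"
    then have "\<xi> \<ge> 0" by simp
    then have "?w \<xi> \<ge> 0" by simp
    have "?w \<xi> * norm (tdelta f (a n) (a 0) \<xi>) \<le> ?w \<xi> * (\<Sum>k<n. norm (tdelta f (a (Suc k)) (a k) \<xi>))"
      by (rule mult_left_mono[OF norm_tdelta_chain_le[OF \<open>\<xi> \<ge> 0\<close> assms(2)] \<open>?w \<xi> \<ge> 0\<close>])
    then show "ennreal (?w \<xi> * norm (tdelta f (a n) (a 0) \<xi>))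
        \<le> (\<Sum>k<n. ennreal (?w \<xi> * norm (tdelta f (a (Suc k)) (a k) \<xi>)))"
      using \<open>?w \<xi> \<ge> 0\<close> by (subst sum_ennreal) (simp_all add: sum_distrib_left ennreal_leI)
  qed
  also have "\<dots> = (\<Sum>k<n. Nbeta phi beta (tdelta f (a (Suc k)) (a k)))"
    unfolding Nbeta_eq_nn_integral_restrict
    by (rule nn_integral_sum) (intro tdelta_weighted_measurable assms(1,3); simp)
  finally show ?thesis .
qed

lemma Nbeta_le_NC2mu:
  assumes "l1 \<le> s" "s < t" "t \<le> l2"
  shows "Nbeta phi beta (M t s) \<le> NC2mu phi beta mu l1 l2 M * ennreal ((t - s) powr mu)"
proof -
  let ?d = "ennreal ((t - s) powr mu)"
  have "Nbeta phi beta (M t s) / ?d \<le> NC2mu phi beta mu l1 l2 M"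
    unfolding NC2mu_def by (rule SUP_upper2[where i="(t, s)"]) (use assms in auto)
  then have "Nbeta phi beta (M t s) / ?d * ?d \<le> NC2mu phi beta mu l1 l2 M * ?d"
    by (rule mult_right_mono) simp
  moreover have "(t - s) powr mu > 0"
    using assms by simp
  ultimately show ?thesis
    by (simp add: ennreal_divide_times ennreal_times_divide mult_divide_eq_ennreal)
qed

lemma Nbeta_tdelta_uniform_partition_le:
  fixes f :: "real \<Rightarrow> real \<Rightarrow> 'v::{banach,second_countable_topology}"
  assumes "phi \<in> borel_measurable lborel" "f \<in> C1beta phi beta l1 l2"
    and "l1 \<le> u" "u < t" "t \<le> l2" "n \<ge> 1"
  shows "Nbeta phi beta (tdelta f t u)
    \<le> NC2mu phi beta mu l1 l2 (tdelta f) * ennreal ((t - u) powr mu) * ennreal (real n powr (1 - mu))"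
proof -
  define h where "h = (t - u) / real n"
  define a where "a k = u + real k * h" for k :: nat
  have "h > 0"
    using assms by (simp add: h_def)
  have "incseq a"
    using \<open>h > 0\<close> by (intro incseq_SucI) (simp add: a_def distrib_right)
  have "a 0 = u" "a n = t"
    using assms(6) by (simp_all add: a_def h_def)
  have a_in: "a k \<in> {l1..l2}" if "k \<le> n" for k
  proof -
    have "real k * h \<le> real n * h"
      using that \<open>h > 0\<close> by simp
    also have "\<dots> = t - u"
      using assms(6) by (simp add: h_def)
    finally show ?thesis
      using assms(3-5) \<open>h > 0\<close> unfolding a_def atLeastAtMost_iff
      by (smt (verit) mult_nonneg_nonneg of_nat_0_le_iff)
  qed
  have "Nbeta phi beta (tdelta f t u) \<le> (\<Sum>k<n. Nbeta phi beta (tdelta f (a (Suc k)) (a k)))"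
    using Nbeta_tdelta_chain_le[OF assms(1) \<open>incseq a\<close>, of n f beta] a_in assms(2)
    unfolding \<open>a 0 = u\<close> \<open>a n = t\<close> C1beta_def Lbeta_def by auto
  also have "\<dots> \<le> (\<Sum>k<n. NC2mu phi beta mu l1 l2 (tdelta f) * ennreal (h powr mu))"
  proof (rule sum_mono)
    fix k assume "k \<in> {..<n}"
    moreover have "a (Suc k) - a k = h"
      by (simp add: a_def distrib_right)
    ultimately show "Nbeta phi beta (tdelta f (a (Suc k)) (a k))
        \<le> NC2mu phi beta mu l1 l2 (tdelta f) * ennreal (h powr mu)"
      using Nbeta_le_NC2mu[of l1 "a k" "a (Suc k)" l2] a_in[of k] a_in[of "Suc k"] \<open>h > 0\<close> by simp
  qed
  also have "\<dots> = NC2mu phi beta mu l1 l2 (tdelta f) * ennreal (real n * h powr mu)"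
    by (simp add: ennreal_mult ennreal_of_nat_eq_real_of_nat mult_ac)
  also have "real n * h powr mu = (t - u) powr mu * real n powr (1 - mu)"
    using assms(4,6) by (simp add: h_def powr_divide powr_diff field_simps)
  finally show ?thesis
    using assms(4) by (simp add: ennreal_mult mult.assoc)
qed

lemma ennreal_eq_0_if_le_powr_decay:
  assumes "mu > 1" "K < \<infinity>" "\<And>n::nat. n \<ge> 1 \<Longrightarrow> x \<le> K * ennreal (real n powr (1 - mu))"
  shows "x = 0"
proof -
  obtain c where "K = ennreal c" "c \<ge> 0"
    using assms(2) by (cases K) auto
  then have x_le: "x \<le> ennreal (c * real n powr (1 - mu))" if "n \<ge> 1" for n :: nat
    using assms(3)[OF that] by (simp add: ennreal_mult)
  then obtain y where "x = ennreal y"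
    by (cases x) (auto simp: top_unique dest: spec[of _ 1])
  have "(\<lambda>n::nat. c * real n powr (1 - mu)) \<longlonglongrightarrow> c * 0"
    by (intro tendsto_mult tendsto_const tendsto_neg_powr filterlim_real_sequentially)
       (use assms(1) in simp)
  moreover have "y \<le> c * real n powr (1 - mu)" if "n \<ge> 1" for n :: nat
    using x_le[OF that] \<open>x = ennreal y\<close> \<open>c \<ge> 0\<close> by (simp add: ennreal_le_iff)
  ultimately have "y \<le> c * 0"
    by (intro LIMSEQ_le_const) (auto intro: exI[of _ 1])
  then show ?thesis
    using \<open>x = ennreal y\<close> by (simp add: ennreal_eq_0_iff)
qed

theorem lemma3p4:
  fixes phi :: "real \<Rightarrow> real" and beta mu l1 l2 :: real
    and f :: "real \<Rightarrow> real \<Rightarrow> 'v::{banach,second_countable_topology}"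
  assumes "phi \<in> borel_measurable lborel"
    and "l1 \<le> l2"
    and "mu > 1" and "beta > 0"
    and "f \<in> C1beta phi beta l1 l2"
    and "NC2mu phi beta mu l1 l2 (tdelta f) < \<infinity>"
  shows "\<forall>t s. l1 \<le> s \<and> s \<le> t \<and> t \<le> l2 \<longrightarrow> Nbeta phi beta (tdelta f t s) = 0"
proof (intro allI impI)
  fix t u assume tu: "l1 \<le> u \<and> u \<le> t \<and> t \<le> l2"
  show "Nbeta phi beta (tdelta f t u) = 0"
  proof (cases "u = t")
    case True
    then show ?thesis
      unfolding Nbeta_def tdelta_def by simp
  next
    case False
    let ?K = "NC2mu phi beta mu l1 l2 (tdelta f) * ennreal ((t - u) powr mu)"
    have "?K < \<infinity>"
      using assms(6) by (simp add: ennreal_mult_less_top)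
    moreover have "Nbeta phi beta (tdelta f t u) \<le> ?K * ennreal (real n powr (1 - mu))"
      if "n \<ge> 1" for n :: nat
      using Nbeta_tdelta_uniform_partition_le[OF assms(1,5)] tu False that by simp
    ultimately show ?thesis
      by (rule ennreal_eq_0_if_le_powr_decay[OF assms(3)])
  qed
qed

end
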